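(* Let $\delta,\zeta\ge 0$, let $n$ be a perfect square, and let $s,\bar s$ be strings of length $n$ with $|\mathrm{lcs}(s,\bar s)|\ge n^{1-\delta}$, split into blocks $b_1,\dots,b_{\sqrt n}$ and $\bar b_1,\dots,\bar b_{\sqrt n}$ as in the context. Let $\widetilde U=\{(b_{i_k},\bar b_{j_k}):1\le k\le l\}$ be a set of block pairs with $i_1<\dots<i_l$, $j_1<\dots<j_l$, $l\ge n^{1/2-2\delta}/8$ and $|\mathrm{lcs}(b_{i_k},\bar b_{j_k})|\ge n^{1/2-\delta}/2$ for every $k$, and let $\widetilde U_1\subseteq\widetilde U$ be the set of pairs in $\widetilde U$ that approximately consist of crebris symbols. If $|\widetilde U_1|\ge|\widetilde U|/2$, then the expected length of the solution returned by Algorithm A3 on $s,\bar s$ is $\Omega(n^{1/2+\zeta})$.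
   Context: $\mathrm{lcs}(x,y)$ denotes a longest common subsequence of $x,y$; $\mathsf{fr}_c(x)$ is the number of occurrences of symbol $c$ in $x$. The strings $s,\bar s$ are split into $\sqrt n$ consecutive blocks of length $\sqrt n$; $b_i,\bar b_i$ are the $i$-th blocks. For a block pair $(b_i,\bar b_j)$, a symbol $c$ is crebris if $\min\{\mathsf{fr}_c(b_i),\mathsf{fr}_c(\bar b_j)\}\ge n^{4\delta+\zeta}$. The pair approximately consists of crebris symbols if $\sum_{c\in C}\mathsf{fr}_c(b_i)\ge n^{1/2-2\delta}/4$, where $C$ is the set of crebris symbols of the pair. Algorithm A3 (randomized): for every $i,j\in[\sqrt n]$ pick a uniformly random position of $b_i$, let $c_{i,j}$ be the symbol there, and set $T[i][j]=\min\{\mathsf{fr}_{c_{i,j}}(b_i),\mathsf{fr}_{c_{i,j}}(\bar b_j)\}$. Compute $D[i][j]=0$ if $i=0$ or $j=0$, and $D[i][j]=\max\{D[i][j-1],D[i-1][j],T[i][j]+D[i-1][j-1]\}$ otherwise. The returned solution is the longest common subsequence of $s,\bar s$ subject to: characters of one block of $s$ are matched only to characters of a single block of $\bar s$ and vice versa, and if $b_i$ is matched to $\bar b_j$ all matched symbols are $c_{i,j}$; its length is $D[\sqrt n][\sqrt n]$. *)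

theory Defs
  imports Complex_Main "HOL-Library.Sublist" "HOL-Library.FuncSet"
begin

definition lcs_len :: "'a list \<Rightarrow> 'a list \<Rightarrow> nat" where
  "lcs_len x y = Max (length ` {z. subseq z x \<and> subseq z y})"

definition fr :: "'a \<Rightarrow> 'a list \<Rightarrow> nat" where
  "fr c x = count_list x c"

text \<open>The i-th block (1-indexed, i in 1..m) of length m of a string.\<close>
definition block :: "nat \<Rightarrow> 'a list \<Rightarrow> nat \<Rightarrow> 'a list" where
  "block m s i = take m (drop ((i - 1) * m) s)"

definition crebris :: "real \<Rightarrow> real \<Rightarrow> nat \<Rightarrow> 'a list \<Rightarrow> 'a list \<Rightarrow> 'a \<Rightarrow> bool" where
  "crebris \<delta> \<zeta> n b b' c \<longleftrightarrow> real (min (fr c b) (fr c b')) \<ge> real n powr (4 * \<delta> + \<zeta>)"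

text \<open>The pair (b, b') approximately consists of crebris symbols.  Symbols not occurring
  in b contribute 0 to the sum, so summing over the symbols of b is the sum over all of C.\<close>
definition approx_crebris :: "real \<Rightarrow> real \<Rightarrow> nat \<Rightarrow> 'a list \<Rightarrow> 'a list \<Rightarrow> bool" where
  "approx_crebris \<delta> \<zeta> n b b' \<longleftrightarrow>
     real (\<Sum>c\<in>{c \<in> set b. crebris \<delta> \<zeta> n b b' c}. fr c b) \<ge> real n powr (1/2 - 2 * \<delta>) / 4"

fun dp :: "(nat \<Rightarrow> nat \<Rightarrow> nat) \<Rightarrow> nat \<Rightarrow> nat \<Rightarrow> nat" where
  "dp T 0 j = 0"
| "dp T (Suc i) 0 = 0"
| "dp T (Suc i) (Suc j) = max (max (dp T (Suc i) j) (dp T i (Suc j))) (T (Suc i) (Suc j) + dp T i j)"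

text \<open>Table T of Algorithm A3 given the random positions p (p (i,j) < m is a position of b_i).\<close>
definition A3_table :: "nat \<Rightarrow> 'a list \<Rightarrow> 'a list \<Rightarrow> (nat \<times> nat \<Rightarrow> nat) \<Rightarrow> nat \<Rightarrow> nat \<Rightarrow> nat" where
  "A3_table m s s' p i j =
     (let c = block m s i ! p (i, j) in min (fr c (block m s i)) (fr c (block m s' j)))"

text \<open>Space of random choices: independent uniform positions for every (i,j).\<close>
definition A3_choices :: "nat \<Rightarrow> (nat \<times> nat \<Rightarrow> nat) set" where
  "A3_choices m = PiE ({1..m} \<times> {1..m}) (\<lambda>_. {..<m})"

definition A3_expected :: "nat \<Rightarrow> 'a list \<Rightarrow> 'a list \<Rightarrow> real" where
  "A3_expected m s s' =
     (\<Sum>p\<in>A3_choices m. real (dp (A3_table m s s' p) m m)) / real (card (A3_choices m))"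

end

theory Submission
  imports Defs
begin

(* For every choice of random positions, D[m][m] dominates the sum of the table entries
   T[i_k][j_k] along the chain of block pairs, because the chain is increasing in both
   coordinates.  By linearity, the expected output dominates the sum of the expected entries,
   and the expectation of T[i][j] is (1/m) * sum over the positions x of b_i of
   min(fr_x(b_i), fr_x(b'_j)).  In a pair that approximately consists of crebris symbols,
   crebris symbols fill at least n^(1/2-2 delta)/4 positions of b_i, each contributing at
   least n^(4 delta+zeta).  At least l/2 >= n^(1/2-2 delta)/16 pairs of the chain qualify,
   and with m = n^(1/2) this gives n^(1/2+zeta)/64. *)

lemma dp_mono:
  assumes "i \<le> i'" and "j \<le> j'"
  shows "dp T i j \<le> dp T i' j'"
proof -
  have step_j: "dp T i j \<le> dp T i (Suc j)" for i j
    by (cases i) auto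
  have step_i: "dp T i j \<le> dp T (Suc i) j" for i j
    by (cases i; cases j) auto
  have "dp T i j \<le> dp T i j'"
    using assms(2) by (induction j' rule: dec_induct) (auto intro: order_trans step_j)
  also have "\<dots> \<le> dp T i' j'"
    using assms(1) by (induction i' rule: dec_induct) (auto intro: order_trans step_i)
  finally show ?thesis .
qed

lemma dp_diagonal_step:
  assumes "i \<ge> 1" and "j \<ge> 1"
  shows "T i j + dp T (i - 1) (j - 1) \<le> dp T i j"
  using assms by (cases i; cases j) auto

lemma sum_chain_le_dp:
  fixes K :: "'k::linorder set"
  assumes "finite K"
    and "\<And>k k'. k \<in> K \<Longrightarrow> k' \<in> K \<Longrightarrow> k < k' \<Longrightarrow> ii k < ii k' \<and> jj k < jj k'"
    and "\<And>k. k \<in> K \<Longrightarrow> ii k \<in> {1..I} \<and> jj k \<in> {1..J}"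
  shows "(\<Sum>k\<in>K. T (ii k) (jj k)) \<le> dp T I J"
  using assms
proof (induction K arbitrary: I J rule: finite_linorder_max_induct)
  case empty
  then show ?case by simp
next
  case (insert b A)
  have "(\<Sum>k\<in>A. T (ii k) (jj k)) \<le> dp T (ii b - 1) (jj b - 1)"
  proof (rule insert.IH)
    fix k assume "k \<in> A"
    then have "ii k < ii b" "jj k < jj b" "ii k \<ge> 1" "jj k \<ge> 1"
      using insert.hyps(2) insert.prems by auto
    then show "ii k \<in> {1..ii b - 1} \<and> jj k \<in> {1..jj b - 1}" by auto
  qed (use insert.prems in auto)
  then have "(\<Sum>k\<in>insert b A. T (ii k) (jj k)) \<le> dp T (ii b) (jj b)"
    using dp_diagonal_step[of "ii b" "jj b" T] insert.prems(2)[of b] insert.hyps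
    by (auto simp: not_le[symmetric])
  also have "\<dots> \<le> dp T I J"
    using insert.prems(2)[of b] by (auto intro: dp_mono)
  finally show ?case .
qed

lemma sum_PiE_component:
  fixes f :: "'b \<Rightarrow> 'c::comm_semiring_1"
  assumes "a \<in> I"
  shows "(\<Sum>p\<in>PiE I A. f (p a)) = of_nat (card (PiE (I - {a}) A)) * (\<Sum>x\<in>A a. f x)"
proof -
  have I: "PiE I A = PiE (insert a (I - {a})) A"
    using assms by (simp add: insert_absorb)
  have "(\<Sum>p\<in>PiE I A. f (p a)) = (\<Sum>(x, g)\<in>A a \<times> PiE (I - {a}) A. f x)"
    unfolding I
    by (rule sum.reindex_bij_witness[of _ "\<lambda>(y, g). g(a := y)" "\<lambda>p. (p a, p(a := undefined))"])
       (auto simp: PiE_def extensional_def)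
  also have "\<dots> = (\<Sum>x\<in>A a. of_nat (card (PiE (I - {a}) A)) * f x)"
    by (simp add: sum.cartesian_product[symmetric])
  finally show ?thesis
    by (simp add: sum_distrib_left)
qed

lemma sum_PiE_component_average:
  fixes f :: "'b \<Rightarrow> real"
  assumes "a \<in> I" and "finite I" and "\<And>i. i \<in> I \<Longrightarrow> finite (A i) \<and> A i \<noteq> {}"
  shows "(\<Sum>p\<in>PiE I A. f (p a)) / card (PiE I A) = (\<Sum>x\<in>A a. f x) / card (A a)"
proof -
  have "card (PiE (I - {a}) A) \<noteq> 0"
    using assms by (simp add: card_PiE)
  moreover have "card (PiE I A) = card (PiE (I - {a}) A) * card (A a)"
    using sum_PiE_component[OF assms(1), of "\<lambda>_. 1::nat" A] by simp
  ultimately show ?thesis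
    using sum_PiE_component[OF assms(1), of f A] by simp
qed

lemma sum_list_min_fr_ge_if_approx_crebris:
  assumes "approx_crebris \<delta> \<zeta> n b b'"
  shows "real n powr (1/2 - 2 * \<delta>) / 4 * real n powr (4 * \<delta> + \<zeta>)
           \<le> real (\<Sum>c\<leftarrow>b. min (fr c b) (fr c b'))"
proof -
  define C where "C = {c \<in> set b. crebris \<delta> \<zeta> n b b' c}"
  have "real n powr (1/2 - 2 * \<delta>) / 4 * real n powr (4 * \<delta> + \<zeta>)
          \<le> real (\<Sum>c\<in>C. fr c b) * real n powr (4 * \<delta> + \<zeta>)"
    using assms unfolding approx_crebris_def C_def by (intro mult_right_mono) auto
  also have "\<dots> = (\<Sum>c\<in>C. real (fr c b) * real n powr (4 * \<delta> + \<zeta>))"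
    by (simp add: sum_distrib_right)
  also have "\<dots> \<le> (\<Sum>c\<in>C. real (fr c b * min (fr c b) (fr c b')))"
    by (rule sum_mono) (auto simp: C_def crebris_def mult_left_mono)
  also have "\<dots> \<le> (\<Sum>c\<in>set b. real (fr c b * min (fr c b) (fr c b')))"
    by (rule sum_mono2) (auto simp: C_def)
  also have "\<dots> = real (\<Sum>c\<leftarrow>b. min (fr c b) (fr c b'))"
    by (simp add: sum_list_map_eq_sum_count fr_def)
  finally show ?thesis .
qed

lemma length_block:
  assumes "i \<in> {1..m}" and "length s = m ^ 2"
  shows "length (block m s i) = m"
proof -
  have "(i - 1) * m + m \<le> m * m"
    using assms(1) by (metis add.commute atLeastAtMost_iff mult_Suc mult_le_mono1 Suc_diff_1 less_le_trans zero_less_one)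
  then show ?thesis
    using assms(2) unfolding block_def by (simp add: power2_eq_square)
qed

definition A3_table_mean :: "nat \<Rightarrow> 'a list \<Rightarrow> 'a list \<Rightarrow> nat \<Rightarrow> nat \<Rightarrow> real" where
  "A3_table_mean m s s' i j =
     (\<Sum>p\<in>A3_choices m. real (A3_table m s s' p i j)) / real (card (A3_choices m))"

lemma A3_table_mean_eq:
  assumes "i \<in> {1..m}" and "j \<in> {1..m}" and "length s = m ^ 2"
  shows "A3_table_mean m s s' i j
           = real (\<Sum>c\<leftarrow>block m s i. min (fr c (block m s i)) (fr c (block m s' j))) / real m"
proof -
  define b where "b = block m s i"
  define g where "g c = min (fr c b) (fr c (block m s' j))" for c
  have "A3_table_mean m s s' i j = (\<Sum>x\<in>{..<m}. real (g (b ! x))) / real (card {..<m})"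
    unfolding A3_table_mean_def A3_choices_def A3_table_def b_def g_def Let_def
    by (rule sum_PiE_component_average) (use assms in \<open>auto simp: lessThan_empty_iff\<close>)
  also have "(\<Sum>x\<in>{..<m}. real (g (b ! x))) = real (\<Sum>c\<leftarrow>b. g c)"
    using length_block[OF assms(1,3)]
    by (simp add: sum_list_sum_nth atLeast0LessThan b_def)
  finally show ?thesis
    by (simp add: b_def g_def)
qed

lemma sum_A3_table_mean_le_A3_expected:
  fixes K :: "'k::linorder set"
  assumes "finite K"
    and "\<And>k k'. k \<in> K \<Longrightarrow> k' \<in> K \<Longrightarrow> k < k' \<Longrightarrow> ii k < ii k' \<and> jj k < jj k'"
    and "\<And>k. k \<in> K \<Longrightarrow> ii k \<in> {1..m} \<and> jj k \<in> {1..m}"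
  shows "(\<Sum>k\<in>K. A3_table_mean m s s' (ii k) (jj k)) \<le> A3_expected m s s'"
proof -
  have chain_le: "(\<Sum>k\<in>K. A3_table m s s' p (ii k) (jj k)) \<le> dp (A3_table m s s' p) m m" for p
    by (rule sum_chain_le_dp) (use assms in auto)
  have "(\<Sum>k\<in>K. \<Sum>p\<in>A3_choices m. real (A3_table m s s' p (ii k) (jj k)))
          = (\<Sum>p\<in>A3_choices m. real (\<Sum>k\<in>K. A3_table m s s' p (ii k) (jj k)))"
    by (subst sum.swap) simp
  also have "\<dots> \<le> (\<Sum>p\<in>A3_choices m. real (dp (A3_table m s s' p) m m))"
    using chain_le by (intro sum_mono) (simp only: of_nat_le_iff)
  finally show ?thesis
    unfolding A3_table_mean_def A3_expected_def sum_divide_distrib[symmetric]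
    by (simp add: divide_right_mono)
qed

lemma A3_expected_ge_card_approx_crebris_chain:
  fixes K :: "'k::linorder set"
  assumes "finite K"
    and "\<And>k k'. k \<in> K \<Longrightarrow> k' \<in> K \<Longrightarrow> k < k' \<Longrightarrow> ii k < ii k' \<and> jj k < jj k'"
    and "\<And>k. k \<in> K \<Longrightarrow> ii k \<in> {1..m} \<and> jj k \<in> {1..m}"
    and "\<And>k. k \<in> K \<Longrightarrow> approx_crebris \<delta> \<zeta> n (block m s (ii k)) (block m s' (jj k))"
    and "length s = m ^ 2"
  shows "real (card K) * (real n powr (1/2 - 2 * \<delta>) / 4 * real n powr (4 * \<delta> + \<zeta>)) / real m
           \<le> A3_expected m s s'"
proof -
  have mean_ge: "real n powr (1/2 - 2 * \<delta>) / 4 * real n powr (4 * \<delta> + \<zeta>) / real m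
          \<le> A3_table_mean m s s' (ii k) (jj k)" if "k \<in> K" for k
  proof -
    have "A3_table_mean m s s' (ii k) (jj k) = real (\<Sum>c\<leftarrow>block m s (ii k).
            min (fr c (block m s (ii k))) (fr c (block m s' (jj k)))) / real m"
      using A3_table_mean_eq assms(3,5) that by blast
    then show ?thesis
      using divide_right_mono[OF sum_list_min_fr_ge_if_approx_crebris[OF assms(4)[OF that]], of "real m"]
      by simp
  qed
  have "real (card K) * (real n powr (1/2 - 2 * \<delta>) / 4 * real n powr (4 * \<delta> + \<zeta>)) / real m
          = (\<Sum>k\<in>K. real n powr (1/2 - 2 * \<delta>) / 4 * real n powr (4 * \<delta> + \<zeta>) / real m)"
    by simp
  also have "\<dots> \<le> (\<Sum>k\<in>K. A3_table_mean m s s' (ii k) (jj k))"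
    using mean_ge by (rule sum_mono)
  also have "\<dots> \<le> A3_expected m s s'"
    using sum_A3_table_mean_le_A3_expected[OF assms(1-3)] .
  finally show ?thesis .
qed

lemma A3_expected_lower_bound:
  fixes \<delta> \<zeta> :: real
  assumes n: "n = m ^ 2" and len: "length s = n"
    and range: "\<forall>k\<in>{1..l}. ii k \<in> {1..m} \<and> jj k \<in> {1..m}"
    and chain: "\<forall>k\<in>{1..l}. \<forall>k'\<in>{1..l}. k < k' \<longrightarrow> ii k < ii k' \<and> jj k < jj k'"
    and l: "real l \<ge> real n powr (1/2 - 2 * \<delta>) / 8"
    and half: "real (card {(i, j) \<in> (\<lambda>k. (ii k, jj k)) ` {1..l}.
                         approx_crebris \<delta> \<zeta> n (block m s i) (block m s' j)})
                 \<ge> real (card ((\<lambda>k. (ii k, jj k)) ` {1..l})) / 2"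
  shows "1/64 * real n powr (1/2 + \<zeta>) \<le> A3_expected m s s'"
proof -
  define K where "K = {k \<in> {1..l}. approx_crebris \<delta> \<zeta> n (block m s (ii k)) (block m s' (jj k))}"
  define x where "x = real n powr (1/2 - 2 * \<delta>)"
  define y where "y = real n powr (4 * \<delta> + \<zeta>)"
  have inj: "inj_on (\<lambda>k. (ii k, jj k)) {1..l}"
  proof (rule inj_onI)
    fix k k' assume "k \<in> {1..l}" "k' \<in> {1..l}" "(ii k, jj k) = (ii k', jj k')"
    then show "k = k'"
      using chain by (metis less_irrefl linorder_neqE_nat prod.inject)
  qed
  have "{(i, j) \<in> (\<lambda>k. (ii k, jj k)) ` {1..l}. approx_crebris \<delta> \<zeta> n (block m s i) (block m s' j)}
          = (\<lambda>k. (ii k, jj k)) ` K"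
    by (auto simp: K_def)
  moreover have "card ((\<lambda>k. (ii k, jj k)) ` K) = card K"
    using inj by (rule card_image[OF inj_on_subset]) (auto simp: K_def)
  ultimately have K: "x / 16 \<le> real (card K)"
    using half l card_image[OF inj] by (simp add: x_def)
  have "real (card K) * (x / 4 * y) / real m \<le> A3_expected m s s'"
    unfolding x_def y_def K_def
    by (rule A3_expected_ge_card_approx_crebris_chain[where ii = ii and jj = jj])
       (use range chain len n in simp_all)
  moreover have "x / 16 * (x / 4 * y) / real m \<le> real (card K) * (x / 4 * y) / real m"
    using K by (intro divide_right_mono mult_right_mono) (simp_all add: x_def y_def)
  moreover have "x / 16 * (x / 4 * y) / real m = 1/64 * real n powr (1/2 + \<zeta>)"
  proof -
    have "real m = real n powr (1/2)"
      using n by (simp add: powr_half_sqrt)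
    moreover have "x * x * y / real n powr (1/2) = real n powr (1/2 + \<zeta>)"
      unfolding x_def y_def by (simp add: powr_add[symmetric] powr_diff[symmetric])
    ultimately show ?thesis by simp
  qed
  ultimately show ?thesis by linarith
qed

theorem mainTheorem3:
  fixes \<delta> \<zeta> :: real
  assumes "\<delta> \<ge> 0" and "\<zeta> \<ge> 0"
  shows "\<exists>C > 0. \<exists>N. \<forall>(m::nat) (n::nat) (s::'a list) (s'::'a list) (l::nat) (ii::nat \<Rightarrow> nat) (jj::nat \<Rightarrow> nat).
     n = m ^ 2 \<and> n \<ge> N \<and>
     length s = n \<and> length s' = n \<and>
     real (lcs_len s s') \<ge> real n powr (1 - \<delta>) \<and>
     (\<forall>k\<in>{1..l}. ii k \<in> {1..m} \<and> jj k \<in> {1..m}) \<and>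
     (\<forall>k\<in>{1..l}. \<forall>k'\<in>{1..l}. k < k' \<longrightarrow> ii k < ii k' \<and> jj k < jj k') \<and>
     real l \<ge> real n powr (1/2 - 2 * \<delta>) / 8 \<and>
     (\<forall>k\<in>{1..l}. real (lcs_len (block m s (ii k)) (block m s' (jj k))) \<ge> real n powr (1/2 - \<delta>) / 2) \<and>
     real (card {(i, j) \<in> (\<lambda>k. (ii k, jj k)) ` {1..l}.
                   approx_crebris \<delta> \<zeta> n (block m s i) (block m s' j)})
       \<ge> real (card ((\<lambda>k. (ii k, jj k)) ` {1..l})) / 2
     \<longrightarrow> A3_expected m s s' \<ge> C * real n powr (1/2 + \<zeta>)"
  by (intro exI[of _ "1/64"] conjI exI[of _ 0] allI impI)
     (simp, elim conjE, rule A3_expected_lower_bound, assumption+)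

end
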